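(* Let $n\ge2$ and consider admissible 4-tuples $(\sigma_0,\sigma_\infty,\sigma_1,\tau)\in S_{2n}^4$. If such a tuple is special and $\sigma_1$ and $\tau$ have disjoint supports, then $\sigma_0=\prod_{i=1}^{n}(i,\,2n+1-i)$, $\sigma_1\tau=\prod_{i=1}^{n-1}(i,\,2n-i)$, and $\tau$ is one of the $n-1$ transpositions $(i,2n-i)$, $1\le i\le n-1$ (each choice giving a special tuple). Two distinct such special tuples are conjugate if and only if they are exchanged by conjugation by $\sigma_\infty^n$; such a conjugation fixes the tuple only when $n$ is even and $\tau=(n/2,\,3n/2)$. Consequently the number of conjugacy classes of admissible 4-tuples with $\sigma_1$ and $\tau$ disjoint is $\lfloor n/2\rfloor$.
   Context: Permutation products are read left to right ($\sigma\sigma'$: first $\sigma$, then $\sigma'$). An admissible 4-tuple (the case $\deg D=4$ with maximal branching, i.e. $A^2$ branched over $0,1,\infty$ and exactly one further point, $\deg A=n$) is $(\sigma_0,\sigma_\infty,\sigma_1,\tau)\in S_{2n}^4$ with $\sigma_0$ a product of $n$ disjoint transpositions, $\sigma_\infty$ a $2n$-cycle, $\sigma_1$ a product of $n-2$ disjoint transpositions, $\tau$ a transposition, and $\sigma_0\sigma_\infty\sigma_1\tau=\mathrm{id}$. Tuples $\Sigma,\Sigma'$ are conjugate if $\Sigma'=\gamma^{-1}\Sigma\gamma$ componentwise for some $\gamma\in S_{2n}$. A tuple is special if $\sigma_\infty=(2n,2n-1,\dots,1)$ (the cycle $2n\mapsto2n-1\mapsto\dots\mapsto1\mapsto2n$)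 and $\sigma_1(2n)=\tau(2n)=2n$; every conjugacy class contains special tuples. *)

theory Defs
  imports "HOL-Combinatorics.Combinatorics"
begin

(* Permutations of {1..2n} are functions nat => nat that permute {1..2n}
   (and fix every other natural number). *)

(* Product read left to right: pmul s s' = "first s, then s'". *)
definition pmul :: "(nat \<Rightarrow> nat) \<Rightarrow> (nat \<Rightarrow> nat) \<Rightarrow> (nat \<Rightarrow> nat)" where
  "pmul s s' = s' \<circ> s"

definition prod_transp :: "(nat \<times> nat) list \<Rightarrow> (nat \<Rightarrow> nat)" where
  "prod_transp ps = foldr (\<lambda>(a,b) f. transpose a b \<circ> f) ps id"

definition prod_disj_transp :: "nat \<Rightarrow> (nat \<Rightarrow> nat) \<Rightarrow> bool" where
  "prod_disj_transp k p \<longleftrightarrow>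
     (\<exists>ps. length ps = k \<and> distinct (concat (map (\<lambda>(a,b). [a,b]) ps)) \<and> p = prod_transp ps)"

definition is_transposition :: "(nat \<Rightarrow> nat) \<Rightarrow> bool" where
  "is_transposition p \<longleftrightarrow> (\<exists>a b. a \<noteq> b \<and> p = transpose a b)"

definition is_full_cycle :: "nat \<Rightarrow> (nat \<Rightarrow> nat) \<Rightarrow> bool" where
  "is_full_cycle n p \<longleftrightarrow>
     (\<exists>xs. length xs = 2*n \<and> distinct xs \<and> set xs = {1..2*n} \<and> p = cycle_of_list xs)"

type_synonym tuple4 = "(nat \<Rightarrow> nat) \<times> (nat \<Rightarrow> nat) \<times> (nat \<Rightarrow> nat) \<times> (nat \<Rightarrow> nat)"

definition admissible :: "nat \<Rightarrow> tuple4 \<Rightarrow> bool" where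
  "admissible n T \<longleftrightarrow> (case T of (s0, si, s1, t) \<Rightarrow>
     s0 permutes {1..2*n} \<and> si permutes {1..2*n} \<and> s1 permutes {1..2*n} \<and> t permutes {1..2*n} \<and>
     prod_disj_transp n s0 \<and> is_full_cycle n si \<and> prod_disj_transp (n-2) s1 \<and>
     is_transposition t \<and> pmul (pmul (pmul s0 si) s1) t = id)"

definition pconj :: "(nat \<Rightarrow> nat) \<Rightarrow> (nat \<Rightarrow> nat) \<Rightarrow> (nat \<Rightarrow> nat)" where
  "pconj g s = pmul (pmul (inv g) s) g"

definition tconj :: "(nat \<Rightarrow> nat) \<Rightarrow> tuple4 \<Rightarrow> tuple4" where
  "tconj g T = (case T of (s0, si, s1, t) \<Rightarrow> (pconj g s0, pconj g si, pconj g s1, pconj g t))"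

definition conjugate :: "nat \<Rightarrow> tuple4 \<Rightarrow> tuple4 \<Rightarrow> bool" where
  "conjugate n T T' \<longleftrightarrow> (\<exists>g. g permutes {1..2*n} \<and> T' = tconj g T)"

definition sigma_std :: "nat \<Rightarrow> (nat \<Rightarrow> nat)" where
  "sigma_std n = cycle_of_list (rev [1..<2*n+1])"

definition special :: "nat \<Rightarrow> tuple4 \<Rightarrow> bool" where
  "special n T \<longleftrightarrow> (case T of (s0, si, s1, t) \<Rightarrow>
     si = sigma_std n \<and> s1 (2*n) = 2*n \<and> t (2*n) = 2*n)"

definition supp :: "(nat \<Rightarrow> nat) \<Rightarrow> nat set" where
  "supp p = {x. p x \<noteq> x}"

definition disj_st :: "tuple4 \<Rightarrow> bool" where
  "disj_st T \<longleftrightarrow> (case T of (s0, si, s1, t) \<Rightarrow> supp s1 \<inter> supp t = {})"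

definition adm_disj :: "nat \<Rightarrow> tuple4 set" where
  "adm_disj n = {T. admissible n T \<and> disj_st T}"

definition conj_rel :: "nat \<Rightarrow> (tuple4 \<times> tuple4) set" where
  "conj_rel n = {(T, T'). T \<in> adm_disj n \<and> T' \<in> adm_disj n \<and> conjugate n T T'}"

end

theory Submission
  imports Defs
begin

text \<open>
  For a special tuple with \<open>\<sigma>\<^sub>1\<close> and \<open>\<tau>\<close> disjoint, the involutions \<open>\<sigma>\<^sub>1\<close> and \<open>\<tau>\<close>
  commute, so \<open>\<sigma>\<^sub>1\<tau>\<close> is an involution and the product relation makes
  \<open>\<sigma>\<^sub>0\<sigma>\<^sub>\<infinity>\<close> equal to it. Hence \<open>\<sigma>\<^sub>0\<close> inverts \<open>\<sigma>\<^sub>\<infinity>\<close> by conjugation, and since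
  \<open>\<sigma>\<^sub>1\<close> and \<open>\<tau>\<close> fix \<open>2n\<close> it maps \<open>2n\<close> to \<open>1\<close>; walking along the cycle
  this forces \<open>\<sigma>\<^sub>0\<close> to be the reflection \<open>x \<mapsto> 2n+1-x\<close>. Then \<open>\<sigma>\<^sub>1\<tau>\<close> is the reflection
  \<open>x \<mapsto> 2n-x\<close>, and \<open>\<tau>\<close> must be one of its factors \<open>(i, 2n-i)\<close>.

  Every admissible tuple with disjoint \<open>\<sigma>\<^sub>1\<close>, \<open>\<tau>\<close> is conjugate to a special one: since
  \<open>\<sigma>\<^sub>1\<close> and \<open>\<tau>\<close> move fewer than \<open>2n\<close> points, a common fixed point can be moved
  to \<open>2n\<close> while \<open>\<sigma>\<^sub>\<infinity>\<close> is moved to the standard cycle. A conjugation between two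
  special tuples centralises \<open>\<sigma>\<^sub>\<infinity>\<close> and \<open>\<sigma>\<^sub>0\<close>, so it is \<open>1\<close> or the half turn
  \<open>\<sigma>\<^sub>\<infinity>\<^sup>n\<close>, which exchanges \<open>(i, 2n-i)\<close> and \<open>(n-i, n+i)\<close>. The classes are
  therefore indexed by \<open>i \<in> {1..\<lfloor>n/2\<rfloor>}\<close>.
\<close>

section \<open>Products of disjoint transpositions\<close>

definition transp_entries :: "(nat \<times> nat) list \<Rightarrow> nat list" where
  "transp_entries ps = concat (map (\<lambda>(a,b). [a,b]) ps)"

lemma transp_entries_simps [simp]:
  "transp_entries [] = []"
  "transp_entries ((a,b) # ps) = a # b # transp_entries ps"
  by (simp_all add: transp_entries_def)

lemma length_transp_entries: "length (transp_entries ps) = 2 * length ps"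
  by (induction ps) auto

lemma prod_disj_transp_iff:
  "prod_disj_transp k p \<longleftrightarrow>
     (\<exists>ps. length ps = k \<and> distinct (transp_entries ps) \<and> p = prod_transp ps)"
  by (simp add: prod_disj_transp_def transp_entries_def)

lemma prod_transp_simps [simp]:
  "prod_transp [] = id"
  "prod_transp ((a,b) # ps) = transpose a b \<circ> prod_transp ps"
  by (simp_all add: prod_transp_def)

lemma prod_transp_fixes: "x \<notin> set (transp_entries ps) \<Longrightarrow> prod_transp ps x = x"
  by (induction ps) auto

lemma prod_transp_involution:
  "distinct (transp_entries ps) \<Longrightarrow> prod_transp ps (prod_transp ps x) = x"
proof (induction ps arbitrary: x)
  case Nil
  then show ?case by simp
next
  case (Cons p ps)
  obtain a b where p: "p = (a,b)" by force
  let ?P = "prod_transp ps"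
  have ab: "a \<noteq> b" "?P a = a" "?P b = b"
    using Cons.prems p by (auto intro: prod_transp_fixes)
  have PP: "?P (?P y) = y" for y
    using Cons p by auto
  show ?case
  proof (cases "?P x \<in> {a, b}")
    case True
    then show ?thesis
      using ab PP p by (auto simp: transpose_def)
  next
    case False
    then have "x \<noteq> a" "x \<noteq> b" using ab by auto
    with False show ?thesis using p PP by (simp add: transpose_def)
  qed
qed

lemma prod_disj_transp_involution: "prod_disj_transp k p \<Longrightarrow> p (p x) = x"
  by (auto simp: prod_disj_transp_iff prod_transp_involution)

lemma prod_transp_permutes: "set (transp_entries ps) \<subseteq> S \<Longrightarrow> prod_transp ps permutes S"
proof (induction ps)
  case Nil
  show ?case using permutes_id by (simp add: id_def)
next
  case (Cons p ps)
  obtain a b where p: "p = (a,b)" by force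
  have "transpose a b permutes S" using Cons.prems p by (auto intro: permutes_swap_id)
  moreover have "prod_transp ps permutes S" using Cons p by simp
  ultimately show ?case
    unfolding p prod_transp_simps by (rule permutes_compose[rotated])
qed

lemma set_transp_entries_reflections:
  "set (transp_entries (map (\<lambda>j. (j, m - j)) js)) = set js \<union> (\<lambda>j. m - j) ` set js"
  by (induction js) auto

lemma distinct_transp_entries_reflections:
  assumes "distinct js" "\<forall>j\<in>set js. 2 * j < m"
  shows "distinct (transp_entries (map (\<lambda>j. (j, m - j)) js))"
  using assms
proof (induction js)
  case (Cons a js)
  have "m - a \<noteq> m - j \<and> a \<noteq> m - j \<and> m - a \<noteq> j" if "j \<in> set js" for j
  proof -
    have "2 * j < m" "2 * a < m" "j \<noteq> a" using Cons.prems that by auto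
    then show ?thesis by linarith
  qed
  with Cons show ?case by (auto simp: set_transp_entries_reflections)
qed simp

lemma prod_transp_reflections_apply:
  assumes "distinct js" "\<forall>j\<in>set js. 2 * j < m"
  shows "prod_transp (map (\<lambda>j. (j, m - j)) js) x =
         (if x \<in> set js \<or> (x \<le> m \<and> m - x \<in> set js) then m - x else x)"
  using assms by (induction js arbitrary: x) (auto simp: transpose_def)


section \<open>The standard cycle and its powers\<close>

lemma sigma_std_permutes: "sigma_std n permutes {1..2*n}"
proof -
  have "set (rev [1..<2*n+1]) = {1..2*n}" by auto
  then show ?thesis unfolding sigma_std_def by (metis cycle_permutes)
qed

lemma is_full_cycle_sigma_std: "is_full_cycle n (sigma_std n)"
  unfolding is_full_cycle_def sigma_std_def by (intro exI[of _ "rev [1..<2*n+1]"]) auto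

lemma funpow_sigma_std_apply:
  assumes "x \<in> {1..2*n}"
  shows "(sigma_std n ^^ k) x = 2*n - (2*n - x + k) mod (2*n)"
proof -
  define cs where "cs = rev [1..<2*n+1]"
  have nth_cs: "cs ! j = 2*n - j" if "j < 2*n" for j
    using that unfolding cs_def by (simp add: rev_nth del: upt_Suc)
  have x: "x = cs ! (2*n - x)" "2*n - x < length cs"
    using assms nth_cs[of "2*n - x"] by (auto simp: cs_def)
  have "(sigma_std n ^^ k) (cs ! (2*n - x)) = rotate k cs ! (2*n - x)"
    using cyclic_rotation[of cs k] x(2) unfolding sigma_std_def cs_def
    by (metis distinct_rev distinct_upt nth_map)
  also have "\<dots> = cs ! ((2*n - x + k) mod (2*n))"
    using x(2) nth_rotate[of "2*n - x" cs k] by (simp add: add.commute cs_def del: upt_Suc)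
  also have "\<dots> = 2*n - (2*n - x + k) mod (2*n)"
    using assms by (intro nth_cs) auto
  finally show ?thesis using x(1) by simp
qed

lemma funpow_sigma_std_outside: "x \<notin> {1..2*n} \<Longrightarrow> (sigma_std n ^^ k) x = x"
  by (rule permutes_not_in[OF permutes_funpow[OF sigma_std_permutes]])

lemma sigma_std_apply:
  "sigma_std n x = (if 2 \<le> x \<and> x \<le> 2*n then x - 1 else if x = 1 \<and> n \<noteq> 0 then 2*n else x)"
proof (cases "x \<in> {1..2*n}")
  case True
  then have "sigma_std n x = 2*n - (2*n - x + 1) mod (2*n)"
    using funpow_sigma_std_apply[of x n 1] by simp
  with True show ?thesis
    by (cases "x = 1") auto
next
  case False
  then show ?thesis using funpow_sigma_std_outside[of x n 1] by auto
qed


definition sigma0_std :: "nat \<Rightarrow> nat \<Rightarrow> nat" where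
  "sigma0_std n = prod_transp (map (\<lambda>i. (i, 2*n+1-i)) [1..<n+1])"

definition sigma1tau_std :: "nat \<Rightarrow> nat \<Rightarrow> nat" where
  "sigma1tau_std n = prod_transp (map (\<lambda>i. (i, 2*n-i)) [1..<n])"

definition sigma1_std :: "nat \<Rightarrow> nat \<Rightarrow> nat \<Rightarrow> nat" where
  "sigma1_std n i = prod_transp (map (\<lambda>j. (j, 2*n-j)) (removeAll i [1..<n]))"

definition half_turn :: "nat \<Rightarrow> nat \<Rightarrow> nat" where
  "half_turn n x = (if 1 \<le> x \<and> x \<le> n then x + n else if n < x \<and> x \<le> 2*n then x - n else x)"

lemma sigma0_std_apply: "sigma0_std n x = (if 1 \<le> x \<and> x \<le> 2*n then 2*n+1-x else x)"
proof -
  have "sigma0_std n x =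
        (if x \<in> set [1..<n+1] \<or> (x \<le> 2*n+1 \<and> 2*n+1-x \<in> set [1..<n+1]) then 2*n+1-x else x)"
    unfolding sigma0_std_def by (rule prod_transp_reflections_apply) auto
  also have "x \<in> set [1..<n+1] \<or> (x \<le> 2*n+1 \<and> 2*n+1-x \<in> set [1..<n+1]) \<longleftrightarrow> 1 \<le> x \<and> x \<le> 2*n"
    by (simp only: set_upt atLeastLessThan_iff) linarith
  finally show ?thesis .
qed

lemma sigma1tau_std_apply: "sigma1tau_std n x = (if 1 \<le> x \<and> x < 2*n \<and> x \<noteq> n then 2*n-x else x)"
proof -
  have "sigma1tau_std n x =
        (if x \<in> set [1..<n] \<or> (x \<le> 2*n \<and> 2*n-x \<in> set [1..<n]) then 2*n-x else x)"
    unfolding sigma1tau_std_def by (rule prod_transp_reflections_apply) auto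
  also have "x \<in> set [1..<n] \<or> (x \<le> 2*n \<and> 2*n-x \<in> set [1..<n]) \<longleftrightarrow> 1 \<le> x \<and> x < 2*n \<and> x \<noteq> n"
    by (simp only: set_upt atLeastLessThan_iff) linarith
  finally show ?thesis .
qed

lemma sigma1_std_apply:
  assumes "1 \<le> i" "i < n"
  shows "sigma1_std n i x =
         (if 1 \<le> x \<and> x < 2*n \<and> x \<noteq> n \<and> x \<noteq> i \<and> x \<noteq> 2*n-i then 2*n-x else x)"
proof -
  let ?js = "removeAll i [1..<n]"
  have "sigma1_std n i x = (if x \<in> set ?js \<or> (x \<le> 2*n \<and> 2*n-x \<in> set ?js) then 2*n-x else x)"
    unfolding sigma1_std_def by (rule prod_transp_reflections_apply) (auto simp: distinct_removeAll)
  also have "x \<in> set ?js \<or> (x \<le> 2*n \<and> 2*n-x \<in> set ?js) \<longleftrightarrow>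
             1 \<le> x \<and> x < 2*n \<and> x \<noteq> n \<and> x \<noteq> i \<and> x \<noteq> 2*n-i"
    using assms by (simp only: set_removeAll set_upt atLeastLessThan_iff Diff_iff singleton_iff) linarith
  finally show ?thesis .
qed

lemma sigma1_std_eq:
  assumes "1 \<le> i" "i < n"
  shows "sigma1_std n i = transpose i (2*n-i) \<circ> sigma1tau_std n"
proof
  fix x
  show "sigma1_std n i x = (transpose i (2*n-i) \<circ> sigma1tau_std n) x"
    using assms by (auto simp: sigma1_std_apply sigma1tau_std_apply transpose_def)
qed

lemma half_turn_eq_funpow: "sigma_std n ^^ n = half_turn n"
proof
  fix x
  show "(sigma_std n ^^ n) x = half_turn n x"
  proof (cases "x \<in> {1..2*n}")
    case True
    then have "(sigma_std n ^^ n) x = 2*n - (2*n - x + n) mod (2*n)"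
      by (rule funpow_sigma_std_apply)
    with True show ?thesis
      by (cases "x \<le> n") (auto simp: half_turn_def mod_if)
  next
    case False
    then show ?thesis by (auto simp: funpow_sigma_std_outside half_turn_def)
  qed
qed

lemma prod_disj_transp_sigma0_std: "prod_disj_transp n (sigma0_std n)"
proof -
  have "distinct (transp_entries (map (\<lambda>i. (i, 2*n+1-i)) [1..<n+1]))"
    by (rule distinct_transp_entries_reflections) auto
  then show ?thesis
    unfolding prod_disj_transp_iff sigma0_std_def
    by (intro exI[of _ "map (\<lambda>i. (i, 2*n+1-i)) [1..<n+1]"]) simp
qed

lemma prod_disj_transp_sigma1_std:
  assumes "1 \<le> i" "i < n"
  shows "prod_disj_transp (n-2) (sigma1_std n i)"
proof -
  have "length (removeAll i [1..<n]) = n - 2"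
    using assms by (simp add: distinct_remove1_removeAll[symmetric] length_remove1)
  then show ?thesis
    unfolding prod_disj_transp_iff sigma1_std_def
    by (intro exI[of _ "map (\<lambda>j. (j, 2*n-j)) (removeAll i [1..<n])"])
       (auto intro: distinct_transp_entries_reflections simp: distinct_removeAll)
qed

lemma sigma0_std_permutes: "sigma0_std n permutes {1..2*n}"
  unfolding sigma0_std_def
  by (rule prod_transp_permutes) (auto simp: set_transp_entries_reflections)

lemma sigma1_std_permutes: "sigma1_std n i permutes {1..2*n}"
  unfolding sigma1_std_def
  by (rule prod_transp_permutes) (auto simp: set_transp_entries_reflections)

lemma sigma_std_sigma0_std: "sigma_std n (sigma0_std n x) = sigma1tau_std n x"
  by (auto simp: sigma_std_apply sigma0_std_apply sigma1tau_std_apply)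

lemma sigma1tau_std_involution: "sigma1tau_std n (sigma1tau_std n x) = x"
  by (auto simp: sigma1tau_std_apply)

lemma half_turn_involution: "half_turn n (half_turn n x) = x"
  by (auto simp: half_turn_def)

lemma inv_half_turn: "inv (half_turn n) = half_turn n"
  by (rule inv_unique_comp) (auto simp: half_turn_involution)

lemma half_turn_permutes: "half_turn n permutes {1..2*n}"
  unfolding half_turn_eq_funpow[symmetric] by (rule permutes_funpow[OF sigma_std_permutes])

lemma half_turn_sigma0_std: "half_turn n (sigma0_std n (half_turn n x)) = sigma0_std n x"
  by (cases "x \<le> n"; cases "x \<le> 2*n") (auto simp: half_turn_def sigma0_std_apply)

lemma half_turn_sigma1tau_std: "half_turn n (sigma1tau_std n (half_turn n x)) = sigma1tau_std n x"
  by (cases "x \<le> n"; cases "x \<le> 2*n") (auto simp: half_turn_def sigma1tau_std_apply)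


section \<open>Conjugation\<close>

lemma pconj_eq: "pconj g s = g \<circ> s \<circ> inv g"
  by (simp add: pconj_def pmul_def comp_assoc)

lemma pconj_apply: "pconj g s x = g (s (inv g x))"
  by (simp add: pconj_eq)

lemma pconj_by_id [simp]: "pconj id s = s"
  by (simp add: pconj_eq)

lemma pconj_pconj:
  assumes "bij g" "bij h"
  shows "pconj h (pconj g s) = pconj (h \<circ> g) s"
  using assms by (simp add: pconj_eq o_inv_distrib comp_assoc)

lemma pconj_inv_pconj:
  assumes "bij g"
  shows "pconj (inv g) (pconj g s) = s"
proof -
  have "pconj (inv g) (pconj g s) = pconj (inv g \<circ> g) s"
    using assms by (simp add: pconj_pconj bij_imp_bij_inv)
  also have "inv g \<circ> g = id"
    using assms by (simp add: bij_is_inj)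
  finally show ?thesis by (simp only: pconj_by_id)
qed

lemma pconj_comp:
  assumes "bij g"
  shows "pconj g (s \<circ> s') = pconj g s \<circ> pconj g s'"
  using assms by (simp add: pconj_eq fun_eq_iff bij_is_inj)

lemma pconj_pmul:
  assumes "bij g"
  shows "pconj g (pmul s s') = pmul (pconj g s) (pconj g s')"
  using pconj_comp[OF assms] by (simp add: pmul_def)

lemma pconj_transpose:
  assumes "bij g"
  shows "pconj g (transpose a b) = transpose (g a) (g b)"
proof
  fix x
  have "transpose (g a) (g b) (g (inv g x)) = g (transpose a b (inv g x))"
    using assms by (simp add: transpose_apply_commute bij_is_inj)
  then show "pconj g (transpose a b) x = transpose (g a) (g b) x"
    using assms by (simp add: pconj_apply bij_is_surj surj_f_inv_f)
qed

lemma pconj_prod_transp: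
  assumes "bij g"
  shows "pconj g (prod_transp ps) = prod_transp (map (map_prod g g) ps)"
proof (induction ps)
  case Nil
  then show ?case using assms by (simp add: pconj_eq fun_eq_iff bij_is_surj surj_f_inv_f)
next
  case (Cons p ps)
  obtain a b where p: "p = (a,b)" by force
  have "pconj g (prod_transp (p # ps)) = pconj g (transpose a b) \<circ> pconj g (prod_transp ps)"
    unfolding p prod_transp_simps by (rule pconj_comp[OF assms])
  also have "\<dots> = prod_transp (map (map_prod g g) (p # ps))"
    unfolding Cons pconj_transpose[OF assms] p by simp
  finally show ?case .
qed

lemma pconj_cycle_of_list:
  assumes "bij g" "distinct xs"
  shows "pconj g (cycle_of_list xs) = cycle_of_list (map g xs)"
  using conjugation_of_cycle[OF assms(2,1)] by (simp add: pconj_eq)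

lemma supp_pconj:
  assumes "bij g"
  shows "supp (pconj g s) = g ` supp s"
proof -
  have "g (s (inv g x)) = x \<longleftrightarrow> s (inv g x) = inv g x" for x
    using bij_inv_eq_iff[OF assms, of "s (inv g x)" x] by auto
  then show ?thesis
    using assms by (simp add: supp_def pconj_apply bij_image_Collect_eq)
qed

lemma pconj_permutes: "g permutes S \<Longrightarrow> s permutes S \<Longrightarrow> pconj g s permutes S"
  unfolding pconj_eq by (intro permutes_compose permutes_inv)

lemma pconj_fixed_commute:
  assumes "bij g" "pconj g s = s"
  shows "g (s x) = s (g x)"
proof -
  have "pconj g s (g x) = g (s x)"
    using assms(1) by (simp add: pconj_apply bij_is_inj)
  then show ?thesis using assms(2) by simp
qed

lemma pconj_by_bij_id:
  assumes "bij g"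
  shows "pconj g id = id"
  using assms by (simp add: pconj_eq fun_eq_iff bij_is_surj surj_f_inv_f)

lemma prod_disj_transp_pconj:
  assumes "bij g" "prod_disj_transp k p"
  shows "prod_disj_transp k (pconj g p)"
proof -
  obtain ps where ps: "length ps = k" "distinct (transp_entries ps)" "p = prod_transp ps"
    using assms(2) by (auto simp: prod_disj_transp_iff)
  have "transp_entries (map (map_prod g g) ps) = map g (transp_entries ps)"
    by (induction ps) auto
  then have "distinct (transp_entries (map (map_prod g g) ps))"
    using ps(2) bij_is_inj[OF assms(1)] by (simp add: distinct_map inj_on_subset[OF _ subset_UNIV])
  then show ?thesis
    unfolding prod_disj_transp_iff using ps assms(1)
    by (intro exI[of _ "map (map_prod g g) ps"]) (simp add: pconj_prod_transp)
qed

lemma is_full_cycle_pconj: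
  assumes "g permutes {1..2*n}" "is_full_cycle n s"
  shows "is_full_cycle n (pconj g s)"
proof -
  obtain xs where xs: "length xs = 2*n" "distinct xs" "set xs = {1..2*n}" "s = cycle_of_list xs"
    using assms(2) by (auto simp: is_full_cycle_def)
  have "pconj g s = cycle_of_list (map g xs)"
    using xs assms(1) by (simp add: pconj_cycle_of_list permutes_bij)
  moreover have "distinct (map g xs)"
    using xs permutes_inj[OF assms(1)] by (simp add: distinct_map inj_on_subset[OF _ subset_UNIV])
  moreover have "set (map g xs) = {1..2*n}"
    using xs permutes_image[OF assms(1)] by simp
  ultimately show ?thesis
    using xs unfolding is_full_cycle_def by (intro exI[of _ "map g xs"]) simp
qed

lemma is_transposition_pconj:
  assumes "bij g" "is_transposition t"
  shows "is_transposition (pconj g t)"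
proof -
  obtain a b where "a \<noteq> b" "t = transpose a b"
    using assms(2) by (auto simp: is_transposition_def)
  then show ?thesis
    using assms(1) unfolding is_transposition_def
    by (intro exI[of _ "g a"] exI[of _ "g b"]) (simp add: pconj_transpose bij_is_inj inj_eq)
qed

lemma admissible_tconj:
  assumes "g permutes {1..2*n}" "admissible n T"
  shows "admissible n (tconj g T)"
proof -
  have g: "bij g" using assms(1) by (rule permutes_bij)
  obtain s0 si s1 t where T: "T = (s0, si, s1, t)" by (cases T)
  have "pmul (pmul (pmul (pconj g s0) (pconj g si)) (pconj g s1)) (pconj g t)
        = pconj g (pmul (pmul (pmul s0 si) s1) t)"
    by (simp add: pconj_pmul[OF g])
  then show ?thesis
    using assms g unfolding T admissible_def tconj_def
    by (auto simp: pconj_permutes prod_disj_transp_pconj is_full_cycle_pconj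
        is_transposition_pconj pconj_by_bij_id)
qed

lemma disj_st_tconj:
  assumes "bij g" "disj_st T"
  shows "disj_st (tconj g T)"
  using assms by (cases T)
    (simp add: disj_st_def tconj_def supp_pconj image_Int[symmetric] bij_is_inj)

lemma adm_disj_tconj: "g permutes {1..2*n} \<Longrightarrow> T \<in> adm_disj n \<Longrightarrow> tconj g T \<in> adm_disj n"
  by (simp add: adm_disj_def admissible_tconj disj_st_tconj permutes_bij)

lemma tconj_by_id [simp]: "tconj id T = T"
  by (cases T) (simp add: tconj_def)

lemma tconj_tconj: "bij g \<Longrightarrow> bij h \<Longrightarrow> tconj h (tconj g T) = tconj (h \<circ> g) T"
  by (cases T) (simp add: tconj_def pconj_pconj)

lemma tconj_inv_tconj: "bij g \<Longrightarrow> tconj (inv g) (tconj g T) = T"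
  by (cases T) (simp add: tconj_def pconj_inv_pconj)

lemma equiv_conj_rel: "equiv (adm_disj n) (conj_rel n)"
proof (rule equivI)
  show "conj_rel n \<subseteq> adm_disj n \<times> adm_disj n"
    unfolding conj_rel_def by auto
  show "refl_on (adm_disj n) (conj_rel n)"
    unfolding refl_on_def conj_rel_def conjugate_def
    by (auto intro!: exI[of _ id] simp: permutes_id)
  show "sym (conj_rel n)"
  proof (rule symI)
    fix T T'
    assume "(T, T') \<in> conj_rel n"
    then obtain g where "g permutes {1..2*n}" "T' = tconj g T" "T \<in> adm_disj n" "T' \<in> adm_disj n"
      unfolding conj_rel_def conjugate_def by auto
    then show "(T', T) \<in> conj_rel n"
      unfolding conj_rel_def conjugate_def
      by (auto intro!: exI[of _ "inv g"] simp: tconj_inv_tconj permutes_inv permutes_bij)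
  qed
  show "trans (conj_rel n)"
  proof (rule transI)
    fix T T' T''
    assume "(T, T') \<in> conj_rel n" "(T', T'') \<in> conj_rel n"
    then obtain g h where "g permutes {1..2*n}" "h permutes {1..2*n}"
      "T' = tconj g T" "T'' = tconj h T'" "T \<in> adm_disj n" "T'' \<in> adm_disj n"
      unfolding conj_rel_def conjugate_def by auto
    then show "(T, T'') \<in> conj_rel n"
      unfolding conj_rel_def conjugate_def
      by (auto intro!: exI[of _ "h \<circ> g"] simp: tconj_tconj permutes_compose permutes_bij)
  qed
qed


definition std_tuple :: "nat \<Rightarrow> nat \<Rightarrow> tuple4" where
  "std_tuple n i = (sigma0_std n, sigma_std n, sigma1_std n i, transpose i (2*n-i))"

lemma pmul_sigma1_std_transpose:
  assumes "1 \<le> i" "i < n"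
  shows "pmul (sigma1_std n i) (transpose i (2*n-i)) = sigma1tau_std n"
  using assms by (simp add: pmul_def sigma1_std_eq comp_assoc[symmetric])

lemma std_tuple_special: "1 \<le> i \<Longrightarrow> i < n \<Longrightarrow> special n (std_tuple n i)"
  by (simp add: special_def std_tuple_def sigma1_std_apply)

lemma std_tuple_adm_disj:
  assumes "1 \<le> i" "i < n"
  shows "std_tuple n i \<in> adm_disj n"
proof -
  have "pmul (pmul (pmul (sigma0_std n) (sigma_std n)) (sigma1_std n i)) (transpose i (2*n-i))
        = pmul (sigma1tau_std n) (sigma1tau_std n)"
    using assms by (simp add: pmul_sigma1_std_transpose[symmetric] pmul_def comp_def
        sigma_std_sigma0_std)
  also have "\<dots> = id"
    by (simp add: pmul_def fun_eq_iff sigma1tau_std_involution)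
  finally have prod: "pmul (pmul (pmul (sigma0_std n) (sigma_std n)) (sigma1_std n i))
                        (transpose i (2*n-i)) = id" .
  have "supp (sigma1_std n i) \<inter> supp (transpose i (2*n-i)) = {}"
    using assms by (auto simp: supp_def sigma1_std_apply transpose_def)
  moreover have "transpose i (2*n-i) permutes {1..2*n}"
    using assms by (intro permutes_swap_id) auto
  moreover have "is_transposition (transpose i (2*n-i))"
    using assms unfolding is_transposition_def by (intro exI[of _ i] exI[of _ "2*n-i"]) auto
  ultimately show ?thesis
    using assms prod sigma0_std_permutes sigma_std_permutes sigma1_std_permutes
    by (simp add: adm_disj_def admissible_def disj_st_def std_tuple_def
        prod_disj_transp_sigma0_std prod_disj_transp_sigma1_std is_full_cycle_sigma_std)
qed

lemma transpose_reflection_inj: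
  fixes i j n :: nat
  assumes "1 \<le> i" "i < n" "1 \<le> j" "j < n" "transpose i (2*n-i) = transpose j (2*n-j)"
  shows "i = j"
proof (rule ccontr)
  assume "i \<noteq> j"
  then have "transpose j (2*n-j) i = i" using assms(1-4) by simp
  moreover have "transpose i (2*n-i) i = 2*n-i" by simp
  ultimately show False using assms by simp
qed

lemma std_tuple_inj:
  "1 \<le> i \<Longrightarrow> i < n \<Longrightarrow> 1 \<le> j \<Longrightarrow> j < n \<Longrightarrow> std_tuple n i = std_tuple n j \<Longrightarrow> i = j"
  unfolding std_tuple_def using transpose_reflection_inj by auto

lemma half_turn_sigma_std: "half_turn n (sigma_std n x) = sigma_std n (half_turn n x)"
  unfolding half_turn_eq_funpow[symmetric] by (rule funpow_swap1[symmetric])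

lemma tconj_half_turn_std_tuple:
  assumes "1 \<le> i" "i < n"
  shows "tconj (half_turn n) (std_tuple n i) = std_tuple n (n-i)"
proof -
  have h: "bij (half_turn n)" by (rule permutes_bij[OF half_turn_permutes])
  have conj: "pconj (half_turn n) f = (\<lambda>x. half_turn n (f (half_turn n x)))" for f
    by (simp add: pconj_eq inv_half_turn comp_def)
  have "pconj (half_turn n) (sigma0_std n) = sigma0_std n"
    by (simp add: conj half_turn_sigma0_std)
  moreover have "pconj (half_turn n) (sigma_std n) = sigma_std n"
    by (simp add: conj half_turn_sigma_std half_turn_involution)
  moreover have "pconj (half_turn n) (transpose i (2*n-i)) = transpose (n-i) (2*n-(n-i))"
    using assms by (auto simp: pconj_transpose[OF h] half_turn_def transpose_commute add.commute)
  moreover have "pconj (half_turn n) (sigma1tau_std n) = sigma1tau_std n"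
    by (simp add: conj half_turn_sigma1tau_std)
  ultimately show ?thesis
    using assms by (simp add: std_tuple_def tconj_def sigma1_std_eq pconj_comp[OF h])
qed


section \<open>Special tuples with disjoint \<open>\<sigma>\<^sub>1\<close> and \<open>\<tau>\<close> are standard\<close>

lemma disjoint_supp_involutions_commute:
  assumes s: "\<And>x. s (s x) = x" and t: "\<And>x. t (t x) = x" and "supp s \<inter> supp t = {}"
  shows "t (s x) = s (t x)"
proof -
  have fix_s: "s y = y" if "t y \<noteq> y" for y
    using assms(3) that by (auto simp: supp_def)
  show ?thesis
  proof (cases "t x = x")
    case True
    show ?thesis
    proof (cases "s x = x")
      case False
      then have "s (s x) \<noteq> s x" using s by metis
      then have "t (s x) = s x" using assms(3) by (auto simp: supp_def)
      with True show ?thesis by simp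
    qed (use True in simp)
  next
    case False
    then have "t (t x) \<noteq> t x" using t by metis
    with False show ?thesis using fix_s by simp
  qed
qed

text \<open>The relation \<open>\<sigma>\<^sub>0 \<sigma>\<^sub>\<infinity> \<sigma>\<^sub>0 = \<sigma>\<^sub>\<infinity>\<^sup>-\<^sup>1\<close> and the value
  \<open>\<sigma>\<^sub>0(2n) = 1\<close> propagate along the cycle \<open>2n \<mapsto> 2n-1 \<mapsto> \<dots>\<close> and pin down \<open>\<sigma>\<^sub>0\<close>.\<close>

lemma sigma0_std_unique:
  assumes perm: "s0 permutes {1..2*n}" and inv0: "\<And>x. s0 (s0 x) = x"
    and inv: "\<And>x. sigma_std n (s0 (sigma_std n (s0 x))) = x"
    and top: "sigma_std n (s0 (2*n)) = 2*n"
  shows "s0 = sigma0_std n"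
proof
  fix x
  have in_range: "s0 y \<in> {1..2*n}" if "y \<in> {1..2*n}" for y
    using permutes_in_image[OF perm] that by blast
  have step: "s0 (2*n - j) = j + 1" if "j < 2*n" for j
    using that
  proof (induction j)
    case 0
    then have "s0 (2*n) \<in> {1..2*n}" using in_range by simp
    with top show ?case by (auto simp: sigma_std_apply split: if_splits)
  next
    case (Suc j)
    let ?y = "2*n - j"
    have "sigma_std n (s0 (s0 ?y)) = ?y - 1"
      using Suc.prems by (simp add: inv0 sigma_std_apply)
    then have "sigma_std n (s0 (?y - 1)) = s0 ?y"
      using inv[of "s0 ?y"] inv0 by metis
    then have "sigma_std n (s0 (?y - 1)) = j + 1"
      using Suc by simp
    moreover have "s0 (?y - 1) \<in> {1..2*n}"
      using in_range Suc.prems by auto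
    ultimately have "s0 (?y - 1) = j + 2"
      using Suc.prems by (auto simp: sigma_std_apply split: if_splits)
    then show ?case
      by (simp add: Suc_diff_Suc[symmetric])
  qed
  show "s0 x = sigma0_std n x"
  proof (cases "x \<in> {1..2*n}")
    case True
    then show ?thesis
      using step[of "2*n - x"] by (auto simp: sigma0_std_apply)
  next
    case False
    then show ?thesis
      using permutes_not_in[OF perm] by (auto simp: sigma0_std_apply)
  qed
qed

lemma transposition_factor_of_sigma1tau_std:
  assumes t: "t = transpose a b" "a \<noteq> b" and "s1 a = a"
    and prod: "\<And>x. t (s1 x) = sigma1tau_std n x"
  shows "\<exists>i\<in>{1..n-1}. t = transpose i (2*n-i)"
proof -
  have "sigma1tau_std n a = b"
    using prod[of a] assms by simp
  then have a: "1 \<le> a" "a < 2*n" "a \<noteq> n" "b = 2*n - a"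
    using t(2) by (auto simp: sigma1tau_std_apply split: if_splits)
  show ?thesis
  proof (cases "a < n")
    case True
    then show ?thesis using a t by (intro bexI[of _ a]) auto
  next
    case False
    then have "t = transpose (2*n-a) (2*n - (2*n-a))"
      using a t by (simp add: transpose_commute)
    then show ?thesis using a False by (intro bexI[of _ "2*n-a"]) auto
  qed
qed

lemma special_adm_disj_eq_std_tuple:
  assumes "T \<in> adm_disj n" "special n T"
  shows "\<exists>i\<in>{1..n-1}. T = std_tuple n i"
proof -
  obtain s0 s1 t where T: "T = (s0, sigma_std n, s1, t)"
    and perm: "s0 permutes {1..2*n}"
    and s0: "prod_disj_transp n s0" and s1: "prod_disj_transp (n-2) s1"
    and t: "is_transposition t" and prod: "pmul (pmul (pmul s0 (sigma_std n)) s1) t = id"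
    and disj: "supp s1 \<inter> supp t = {}"
    and top: "s1 (2*n) = 2*n" "t (2*n) = 2*n"
    using assms by (cases T) (auto simp: adm_disj_def admissible_def disj_st_def special_def)
  obtain a b where ab: "t = transpose a b" "a \<noteq> b"
    using t by (auto simp: is_transposition_def)
  have inv0: "s0 (s0 x) = x" and inv1: "s1 (s1 x) = x" for x
    using s0 s1 by (auto intro: prod_disj_transp_involution)
  have comm: "t (s1 x) = s1 (t x)" for x
    using disjoint_supp_involutions_commute[OF inv1] disj ab by simp
  have ts1_inv: "t (s1 (t (s1 x))) = x" for x
    using comm inv1 ab by simp
  text \<open>\<open>\<sigma>\<^sub>0\<sigma>\<^sub>\<infinity>\<close> is inverse to the involution \<open>\<sigma>\<^sub>1\<tau>\<close>, hence equal to it.\<close>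
  have ts1: "sigma_std n (s0 x) = t (s1 x)" for x
    using fun_cong[OF prod, of x] ts1_inv[of "sigma_std n (s0 x)"] by (simp add: pmul_def)
  have "s0 = sigma0_std n"
  proof (rule sigma0_std_unique[OF perm inv0])
    show "sigma_std n (s0 (sigma_std n (s0 x))) = x" for x
      by (simp add: ts1 ts1_inv)
    show "sigma_std n (s0 (2*n)) = 2*n"
      by (simp add: ts1 top)
  qed
  then have ts1_std: "t (s1 x) = sigma1tau_std n x" for x
    using ts1 sigma_std_sigma0_std by metis
  have "s1 a = a"
    using disj ab by (auto simp: supp_def)
  then obtain i where i: "i \<in> {1..n-1}" "t = transpose i (2*n-i)"
    using transposition_factor_of_sigma1tau_std[OF ab] ts1_std by blast
  have i_bounds: "1 \<le> i" "i < n" using i(1) by auto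
  have "s1 = sigma1_std n i"
  proof
    fix x
    have "s1 x = t (t (s1 x))" using ab by simp
    also have "\<dots> = sigma1_std n i x"
      using i ts1_std by (simp add: sigma1_std_eq[OF i_bounds])
    finally show "s1 x = sigma1_std n i x" .
  qed
  with i T \<open>s0 = sigma0_std n\<close> show ?thesis
    by (auto simp: std_tuple_def)
qed

lemma special_adm_disj_structure:
  assumes "admissible n (s0, si, s1, t)" "special n (s0, si, s1, t)" "disj_st (s0, si, s1, t)"
  shows "s0 = prod_transp (map (\<lambda>i. (i, 2*n+1-i)) [1..<n+1]) \<and>
         pmul s1 t = prod_transp (map (\<lambda>i. (i, 2*n-i)) [1..<n]) \<and>
         (\<exists>i\<in>{1..n-1}. t = transpose i (2*n-i))"
proof -
  have "(s0, si, s1, t) \<in> adm_disj n"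
    using assms by (simp add: adm_disj_def)
  then obtain i where i: "i \<in> {1..n-1}" "(s0, si, s1, t) = std_tuple n i"
    using special_adm_disj_eq_std_tuple assms(2) by blast
  then have "1 \<le> i" "i < n" by auto
  from i(2) have "s0 = sigma0_std n" "s1 = sigma1_std n i" "t = transpose i (2*n-i)"
    by (simp_all add: std_tuple_def)
  with i(1) pmul_sigma1_std_transpose[OF \<open>1 \<le> i\<close> \<open>i < n\<close>] show ?thesis
    unfolding sigma0_std_def sigma1tau_std_def by blast
qed

lemma ex_special_adm_disj_transpose:
  assumes "i \<in> {1..n-1}"
  shows "\<exists>s0 si s1. admissible n (s0, si, s1, transpose i (2*n-i)) \<and>
           special n (s0, si, s1, transpose i (2*n-i)) \<and> disj_st (s0, si, s1, transpose i (2*n-i))"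
proof -
  have "1 \<le> i" "i < n" using assms by auto
  then have "std_tuple n i \<in> adm_disj n" "special n (std_tuple n i)"
    by (simp_all add: std_tuple_adm_disj std_tuple_special)
  then show ?thesis
    unfolding adm_disj_def std_tuple_def by blast
qed


section \<open>Every class contains a standard tuple\<close>

lemma permutes_map_eq:
  assumes "distinct xs" "distinct ys" "set xs = S" "set ys = S"
  shows "\<exists>g. g permutes S \<and> map g xs = ys"
proof -
  have len: "length xs = length ys"
    using assms by (metis distinct_card)
  define g where "g x = (case map_of (zip xs ys) x of None \<Rightarrow> x | Some y \<Rightarrow> y)" for x
  have "map g xs = ys"
    using assms(1) len by (intro nth_equalityI) (auto simp: g_def map_of_zip_nth)
  moreover have "g permutes S"
  proof (rule bij_imp_permutes)
    have "g ` S = S"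
      using \<open>map g xs = ys\<close> assms(3,4) by (metis list.set_map)
    moreover have "finite S" using assms(3) by auto
    ultimately show "bij_betw g S S"
      by (simp add: bij_betw_def eq_card_imp_inj_on)
    have "fst ` set (zip xs ys) = S"
      using len assms(3) by (metis map_fst_zip set_map)
    then have "map_of (zip xs ys) x = None" if "x \<notin> S" for x
      using that by (simp add: map_of_eq_None_iff)
    then show "g x = x" if "x \<notin> S" for x
      using that by (simp add: g_def)
  qed
  ultimately show ?thesis by blast
qed

lemma full_cycle_conj_sigma_std:
  assumes "is_full_cycle n si" "p \<in> {1..2*n}"
  shows "\<exists>g. g permutes {1..2*n} \<and> pconj g si = sigma_std n \<and> g p = 2*n"
proof -
  obtain xs where xs: "length xs = 2*n" "distinct xs" "set xs = {1..2*n}" "si = cycle_of_list xs"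
    using assms(1) by (auto simp: is_full_cycle_def)
  obtain k where k: "k < length xs" "xs ! k = p"
    using assms(2) xs(3) by (metis in_set_conv_nth)
  define xs' where "xs' = rotate k xs"
  have "xs' \<noteq> []"
    using k by (auto simp: xs'_def)
  then have "hd xs' = xs' ! 0"
    by (rule hd_conv_nth)
  also have "\<dots> = xs ! ((k + 0) mod length xs)"
    unfolding xs'_def using k by (intro nth_rotate) (cases xs; simp)
  also have "\<dots> = p"
    using k by simp
  finally have xs': "distinct xs'" "set xs' = {1..2*n}" "hd xs' = p" "si = cycle_of_list xs'"
    using xs cycle_of_list_rotate_independent[of xs k] by (auto simp: xs'_def)
  have ys: "distinct (rev [1..<2*n+1])" "set (rev [1..<2*n+1]) = {1..2*n}"
    by auto
  obtain g where g: "g permutes {1..2*n}" "map g xs' = rev [1..<2*n+1]"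
    using permutes_map_eq[OF xs'(1) ys(1) xs'(2) ys(2)] by blast
  have "pconj g si = cycle_of_list (map g xs')"
    using xs' g(1) by (simp add: pconj_cycle_of_list permutes_bij)
  moreover have "g p = 2*n"
  proof -
    have "xs' \<noteq> []" using xs'(2) assms(2) by auto
    then have "g p = hd (map g xs')" using xs'(3) by (simp add: hd_map)
    also have "\<dots> = 2*n" using g(2) assms(2) by (simp add: hd_rev del: upt_Suc)
    finally show ?thesis .
  qed
  ultimately show ?thesis
    using g by (auto simp: sigma_std_def)
qed

text \<open>\<open>\<sigma>\<^sub>1\<close> and \<open>\<tau>\<close> move at most \<open>2(n-2) + 2 < 2n\<close> points.\<close>

lemma admissible_common_fixed_point:
  assumes "n \<ge> 2" "admissible n (s0, si, s1, t)"
  shows "\<exists>p\<in>{1..2*n}. s1 p = p \<and> t p = p"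
proof -
  obtain ps where ps: "length ps = n-2" "distinct (transp_entries ps)" "s1 = prod_transp ps"
    using assms(2) by (auto simp: admissible_def prod_disj_transp_iff)
  obtain a b where ab: "t = transpose a b"
    using assms(2) by (auto simp: admissible_def is_transposition_def)
  have "card {a, b} \<le> 2"
    by (simp add: card_insert_if)
  then have "card (set (transp_entries ps) \<union> {a, b}) \<le> 2*(n-2) + 2"
    using card_Un_le[of "set (transp_entries ps)" "{a, b}"] card_length[of "transp_entries ps"]
    by (simp add: length_transp_entries ps(1))
  also have "\<dots> < card {1..2*n}"
    using assms(1) by simp
  finally have "\<not> {1..2*n} \<subseteq> set (transp_entries ps) \<union> {a, b}"
    by (meson card_mono finite_Un finite_insert List.finite_set finite.emptyI not_le)
  then obtain p where "p \<in> {1..2*n}" "p \<notin> set (transp_entries ps)" "p \<noteq> a" "p \<noteq> b"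
    by blast
  then show ?thesis
    using ps ab by (auto intro!: bexI[of _ p] prod_transp_fixes)
qed

lemma adm_disj_conjugate_std_tuple:
  assumes "n \<ge> 2" "T \<in> adm_disj n"
  shows "\<exists>i\<in>{1..n-1}. conjugate n T (std_tuple n i)"
proof -
  obtain s0 si s1 t where T: "T = (s0, si, s1, t)" by (cases T)
  obtain p where p: "p \<in> {1..2*n}" "s1 p = p" "t p = p"
    using admissible_common_fixed_point[OF assms(1), of s0 si s1 t] assms(2)
    by (auto simp: T adm_disj_def)
  obtain g where g: "g permutes {1..2*n}" "pconj g si = sigma_std n" "g p = 2*n"
    using full_cycle_conj_sigma_std[OF _ p(1)] assms(2) by (auto simp: T adm_disj_def admissible_def)
  have "inv g (2*n) = p"
    using g permutes_inverses(2)[OF g(1)] by metis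
  then have "special n (tconj g T)"
    using g p by (simp add: T special_def tconj_def pconj_apply)
  moreover have "tconj g T \<in> adm_disj n"
    using adm_disj_tconj[OF g(1) assms(2)] .
  ultimately obtain i where "i \<in> {1..n-1}" "std_tuple n i = tconj g T"
    using special_adm_disj_eq_std_tuple by metis
  then show ?thesis
    using g(1) unfolding conjugate_def by blast
qed


section \<open>Conjugacy between special tuples\<close>

lemma sigma_std_commuting_eqI:
  assumes f: "\<And>x. f (sigma_std n x) = sigma_std n (f x)"
    and h: "\<And>x. h (sigma_std n x) = sigma_std n (h x)"
    and top: "f (2*n) = h (2*n)"
    and outside: "\<And>x. x \<notin> {1..2*n} \<Longrightarrow> f x = x" "\<And>x. x \<notin> {1..2*n} \<Longrightarrow> h x = x"
  shows "f = h"
proof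
  have on_cycle: "f (2*n - j) = h (2*n - j)" if "j < 2*n" for j
    using that
  proof (induction j)
    case (Suc j)
    have "sigma_std n (2*n - j) = 2*n - Suc j"
      using Suc.prems by (auto simp: sigma_std_apply)
    then show ?case
      using f[of "2*n - j"] h[of "2*n - j"] Suc by simp
  qed (simp add: top)
  fix x
  show "f x = h x"
  proof (cases "x \<in> {1..2*n}")
    case True
    then show ?thesis using on_cycle[of "2*n - x"] by auto
  next
    case False
    then show ?thesis using outside by simp
  qed
qed

lemma centralizer_sigma_std_sigma0_std:
  assumes "g permutes {1..2*n}"
    and "pconj g (sigma_std n) = sigma_std n" "pconj g (sigma0_std n) = sigma0_std n"
  shows "g = id \<or> g = half_turn n"
proof -
  have bij: "bij g" using assms(1) by (rule permutes_bij)
  have g_sigma: "g (sigma_std n x) = sigma_std n (g x)" for x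
    using pconj_fixed_commute[OF bij assms(2)] .
  have "g (sigma0_std n x) = sigma0_std n (g x)" for x
    using pconj_fixed_commute[OF bij assms(3)] .
  then have g_sigma1tau: "g (sigma1tau_std n x) = sigma1tau_std n (g x)" for x
    using g_sigma sigma_std_sigma0_std by metis
  have outside: "x \<notin> {1..2*n} \<Longrightarrow> g x = x" for x
    using assms(1) by (rule permutes_not_in)
  show ?thesis
  proof (cases "n = 0")
    case True
    then show ?thesis using outside by auto
  next
    case False
    have "g (2*n) \<in> {1..2*n}"
      using permutes_in_image[OF assms(1)] False by simp
    moreover have "sigma1tau_std n (g (2*n)) = g (2*n)"
      using g_sigma1tau[of "2*n"] by (simp add: sigma1tau_std_apply)
    ultimately have "g (2*n) = n \<or> g (2*n) = 2*n"
      by (auto simp: sigma1tau_std_apply split: if_splits)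
    then show ?thesis
    proof
      assume "g (2*n) = n"
      have "g = half_turn n"
      proof (rule sigma_std_commuting_eqI)
        show "g (sigma_std n x) = sigma_std n (g x)" for x by (rule g_sigma)
        show "half_turn n (sigma_std n x) = sigma_std n (half_turn n x)" for x
          by (rule half_turn_sigma_std)
        show "g (2*n) = half_turn n (2*n)"
          using \<open>g (2*n) = n\<close> False by (simp add: half_turn_def)
        show "g x = x" if "x \<notin> {1..2*n}" for x using that by (rule outside)
        show "half_turn n x = x" if "x \<notin> {1..2*n}" for x
          using that by (auto simp: half_turn_def)
      qed
      then show ?thesis ..
    next
      assume "g (2*n) = 2*n"
      then have "g = id"
        using g_sigma outside by (intro sigma_std_commuting_eqI) auto
      then show ?thesis ..
    qed
  qed
qed

lemma std_tuple_conjugate_iff: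
  assumes i: "1 \<le> i" "i < n" and j: "1 \<le> j" "j < n"
  shows "conjugate n (std_tuple n i) (std_tuple n j) \<longleftrightarrow> j = i \<or> j = n - i"
proof
  assume "conjugate n (std_tuple n i) (std_tuple n j)"
  then obtain g where g: "g permutes {1..2*n}" and ij: "std_tuple n j = tconj g (std_tuple n i)"
    unfolding conjugate_def by blast
  then have "pconj g (sigma_std n) = sigma_std n" "pconj g (sigma0_std n) = sigma0_std n"
    by (auto simp: std_tuple_def tconj_def)
  with g have "g = id \<or> g = half_turn n"
    by (rule centralizer_sigma_std_sigma0_std)
  then show "j = i \<or> j = n - i"
  proof
    assume "g = id"
    then show ?thesis using ij std_tuple_inj[OF j i] by simp
  next
    assume "g = half_turn n"
    then have "std_tuple n j = std_tuple n (n - i)"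
      using ij tconj_half_turn_std_tuple[OF i] by simp
    then show ?thesis using std_tuple_inj[OF j, of "n - i"] i by simp
  qed
next
  assume "j = i \<or> j = n - i"
  then show "conjugate n (std_tuple n i) (std_tuple n j)"
  proof
    assume "j = i"
    then show ?thesis
      unfolding conjugate_def by (intro exI[of _ id]) (simp add: permutes_id)
  next
    assume "j = n - i"
    then show ?thesis
      unfolding conjugate_def using tconj_half_turn_std_tuple[OF i] half_turn_permutes by metis
  qed
qed

lemma std_tuple_half_turn_fixed_iff:
  assumes "1 \<le> i" "i < n"
  shows "tconj (half_turn n) (std_tuple n i) = std_tuple n i \<longleftrightarrow>
         even n \<and> transpose i (2*n-i) = transpose (n div 2) (3*n div 2)"
proof -
  have "tconj (half_turn n) (std_tuple n i) = std_tuple n i \<longleftrightarrow> n - i = i"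
    using assms std_tuple_inj[of "n - i" n i] by (auto simp: tconj_half_turn_std_tuple)
  also have "\<dots> \<longleftrightarrow> even n \<and> transpose i (2*n-i) = transpose (n div 2) (3*n div 2)"
  proof
    assume "n - i = i"
    then have "n = 2*i" using assms by simp
    then show "even n \<and> transpose i (2*n-i) = transpose (n div 2) (3*n div 2)"
      by simp
  next
    assume h: "even n \<and> transpose i (2*n-i) = transpose (n div 2) (3*n div 2)"
    then obtain m where m: "n = 2*m" by blast
    then have "transpose i (2*n-i) = transpose m (2*n-m)"
      using h by (simp add: m)
    then have "i = m"
      using assms m by (intro transpose_reflection_inj[of i n m]) auto
    with m show "n - i = i" by simp
  qed
  finally show ?thesis .
qed

lemma special_conjugate_iff:
  assumes "T \<in> adm_disj n" "special n T" "T' \<in> adm_disj n" "special n T'" "T \<noteq> T'"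
  shows "conjugate n T T' \<longleftrightarrow> tconj (sigma_std n ^^ n) T = T' \<and> tconj (sigma_std n ^^ n) T' = T"
proof -
  obtain i where "i \<in> {1..n-1}" "T = std_tuple n i"
    using special_adm_disj_eq_std_tuple[OF assms(1,2)] by blast
  then have i: "1 \<le> i" "i < n" "T = std_tuple n i" by auto
  obtain j where "j \<in> {1..n-1}" "T' = std_tuple n j"
    using special_adm_disj_eq_std_tuple[OF assms(3,4)] by blast
  then have j: "1 \<le> j" "j < n" "T' = std_tuple n j" by auto
  have "j \<noteq> i" using assms(5) i(3) j(3) by blast
  have "conjugate n T T' \<longleftrightarrow> j = n - i"
    using std_tuple_conjugate_iff[OF i(1,2) j(1,2)] \<open>j \<noteq> i\<close> i j by simp
  also have "\<dots> \<longleftrightarrow> tconj (half_turn n) T = T' \<and> tconj (half_turn n) T' = T"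
  proof
    assume "j = n - i"
    then show "tconj (half_turn n) T = T' \<and> tconj (half_turn n) T' = T"
      using i j tconj_half_turn_std_tuple[OF i(1,2)] tconj_half_turn_std_tuple[OF j(1,2)] by simp
  next
    assume "tconj (half_turn n) T = T' \<and> tconj (half_turn n) T' = T"
    then have "std_tuple n (n - i) = std_tuple n j"
      using i(3) j(3) tconj_half_turn_std_tuple[OF i(1,2)] by simp
    then show "j = n - i"
      using std_tuple_inj[of "n - i" n j] i(1,2) j(1,2) by simp
  qed
  finally show ?thesis
    by (simp add: half_turn_eq_funpow)
qed

lemma special_half_turn_fixed_iff:
  assumes "(s0, si, s1, t) \<in> adm_disj n" "special n (s0, si, s1, t)"
  shows "tconj (sigma_std n ^^ n) (s0, si, s1, t) = (s0, si, s1, t) \<longleftrightarrow>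
         even n \<and> t = transpose (n div 2) (3*n div 2)"
proof -
  obtain i where "i \<in> {1..n-1}" "(s0, si, s1, t) = std_tuple n i"
    using special_adm_disj_eq_std_tuple assms by blast
  then have i: "1 \<le> i" "i < n" "(s0, si, s1, t) = std_tuple n i"
    by auto
  then have "t = transpose i (2*n-i)"
    by (simp add: std_tuple_def)
  with i show ?thesis
    using std_tuple_half_turn_fixed_iff[OF i(1,2)] by (simp add: half_turn_eq_funpow)
qed


section \<open>Counting the classes\<close>

lemma card_adm_disj_quotient:
  assumes "n \<ge> 2"
  shows "card (adm_disj n // conj_rel n) = n div 2"
proof -
  define cls where "cls i = conj_rel n `` {std_tuple n i}" for i
  have cls_eq_iff: "cls i = cls j \<longleftrightarrow> j = i \<or> j = n - i"
    if ij: "1 \<le> i" "i < n" "1 \<le> j" "j < n" for i j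
  proof -
    have "cls i = cls j \<longleftrightarrow> (std_tuple n i, std_tuple n j) \<in> conj_rel n"
      unfolding cls_def using ij
      by (intro eq_equiv_class_iff[OF equiv_conj_rel std_tuple_adm_disj std_tuple_adm_disj])
    also have "\<dots> \<longleftrightarrow> conjugate n (std_tuple n i) (std_tuple n j)"
      using ij std_tuple_adm_disj by (simp add: conj_rel_def)
    also have "\<dots> \<longleftrightarrow> j = i \<or> j = n - i"
      using ij by (rule std_tuple_conjugate_iff)
    finally show ?thesis .
  qed
  have "adm_disj n // conj_rel n = cls ` {1..n-1}"
  proof
    show "adm_disj n // conj_rel n \<subseteq> cls ` {1..n-1}"
    proof
      fix X
      assume "X \<in> adm_disj n // conj_rel n"
      then obtain T where X: "X = conj_rel n `` {T}" and T: "T \<in> adm_disj n"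
        by (rule quotientE)
      obtain i where i: "i \<in> {1..n-1}" "conjugate n T (std_tuple n i)"
        using adm_disj_conjugate_std_tuple[OF assms T] by blast
      then have "(T, std_tuple n i) \<in> conj_rel n"
        using T std_tuple_adm_disj[of i n] by (auto simp: conj_rel_def)
      then have "X = cls i"
        unfolding X cls_def by (rule equiv_class_eq[OF equiv_conj_rel])
      with i show "X \<in> cls ` {1..n-1}" by blast
    qed
    show "cls ` {1..n-1} \<subseteq> adm_disj n // conj_rel n"
    proof
      fix X
      assume "X \<in> cls ` {1..n-1}"
      then obtain i where "1 \<le> i" "i < n" "X = cls i" by fastforce
      then show "X \<in> adm_disj n // conj_rel n"
        unfolding cls_def by (simp add: quotientI std_tuple_adm_disj)
    qed
  qed
  also have "\<dots> = cls ` {1..n div 2}"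
  proof
    show "cls ` {1..n div 2} \<subseteq> cls ` {1..n-1}"
      by (rule image_mono) auto
    show "cls ` {1..n-1} \<subseteq> cls ` {1..n div 2}"
    proof (rule image_subsetI)
      fix i
      assume i: "i \<in> {1..n-1}"
      show "cls i \<in> cls ` {1..n div 2}"
      proof (cases "i \<le> n div 2")
        case True
        with i show ?thesis by auto
      next
        case False
        then have "n - i \<in> {1..n div 2}" "cls i = cls (n - i)"
          using i cls_eq_iff[of i "n - i"] by auto
        then show ?thesis by (metis imageI)
      qed
    qed
  qed
  also have "card \<dots> = n div 2"
  proof -
    have "inj_on cls {1..n div 2}"
    proof (rule inj_onI)
      fix i j
      assume ij: "i \<in> {1..n div 2}" "j \<in> {1..n div 2}" "cls i = cls j"
      then have "j = i \<or> j = n - i"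
        using cls_eq_iff[of i j] assms by auto
      with ij show "i = j" by auto
    qed
    then show ?thesis by (simp add: card_image)
  qed
  finally show ?thesis .
qed

theorem mainTheorem12:
  fixes n :: nat
  assumes "n \<ge> 2"
  shows
    "(\<forall>s0 si s1 t. admissible n (s0, si, s1, t) \<and> special n (s0, si, s1, t) \<and> disj_st (s0, si, s1, t) \<longrightarrow>
        s0 = prod_transp (map (\<lambda>i. (i, 2*n+1-i)) [1..<n+1]) \<and>
        pmul s1 t = prod_transp (map (\<lambda>i. (i, 2*n-i)) [1..<n]) \<and>
        (\<exists>i\<in>{1..n-1}. t = transpose i (2*n-i)))
   \<and> (\<forall>i\<in>{1..n-1}. \<exists>s0 si s1.
        admissible n (s0, si, s1, transpose i (2*n-i)) \<and> special n (s0, si, s1, transpose i (2*n-i)) \<and>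
        disj_st (s0, si, s1, transpose i (2*n-i)))
   \<and> (\<forall>T T'. T \<in> adm_disj n \<and> special n T \<and> T' \<in> adm_disj n \<and> special n T' \<and> T \<noteq> T' \<longrightarrow>
        (conjugate n T T' \<longleftrightarrow>
           (tconj (sigma_std n ^^ n) T = T' \<and> tconj (sigma_std n ^^ n) T' = T)))
   \<and> (\<forall>s0 si s1 t. (s0, si, s1, t) \<in> adm_disj n \<and> special n (s0, si, s1, t) \<longrightarrow>
        (tconj (sigma_std n ^^ n) (s0, si, s1, t) = (s0, si, s1, t) \<longleftrightarrow>
           even n \<and> t = transpose (n div 2) (3*n div 2)))
   \<and> card (adm_disj n // conj_rel n) = n div 2"
  using special_adm_disj_structure ex_special_adm_disj_transpose special_conjugate_iff
    special_half_turn_fixed_iff card_adm_disj_quotient[OF assms]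
  by (intro conjI; blast)

end
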